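(* Let $G$ be an $n$-resource selection game. Then $h^s_j=h^{s'}_j$ for every $j\in[n]$ and every two Nash equilibria $s,s'$ of $G$.
   Context: Write $[n]=\{1,\ldots,n\}$ and $\mathbb{R}_{\ge}=[0,\infty)$. An $n$-resource selection game is a pair $G=\bigl((f_j)_{j=1}^n;(\mu^{R})_{\emptyset\ne R\subseteq[n]}\bigr)$ where each $f_j:\mathbb{R}_{\ge}\to\mathbb{R}$ is nondecreasing (not necessarily continuous) and $\mu^R\in\mathbb{R}_{\ge}$ for every nonempty $R\subseteq[n]$. A consumption profile is a map $s$ assigning to each nonempty $R\subseteq[n]$ a vector $s(R)\in\mathbb{R}_{\ge}^{[n]}$ with $s_j(R)=0$ for $j\notin R$ and $\sum_{j}s_j(R)=\mu^R$. The load of resource $j$ is $\mu^s_j=\sum_{R}s_j(R)$ and its cost is $h^s_j=f_j(\mu^s_j)$. $s$ is a Nash equilibrium if for every nonempty $R$, every $k$ with $s_k(R)>0$ and every $j\in R$, $h^s_k\le h^s_j$. *)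

theory Defs
  imports Complex_Main
begin

definition resource_sets :: "nat \<Rightarrow> nat set set" where
  "resource_sets n = {R. R \<subseteq> {1..n} \<and> R \<noteq> {}}"

definition is_rs_game :: "nat \<Rightarrow> (nat \<Rightarrow> real \<Rightarrow> real) \<Rightarrow> (nat set \<Rightarrow> real) \<Rightarrow> bool" where
  "is_rs_game n f mu \<longleftrightarrow>
     (\<forall>j\<in>{1..n}. \<forall>x y. 0 \<le> x \<longrightarrow> x \<le> y \<longrightarrow> f j x \<le> f j y) \<and>
     (\<forall>R\<in>resource_sets n. 0 \<le> mu R)"

definition is_consumption_profile :: "nat \<Rightarrow> (nat set \<Rightarrow> real) \<Rightarrow> (nat set \<Rightarrow> nat \<Rightarrow> real) \<Rightarrow> bool" where
  "is_consumption_profile n mu s \<longleftrightarrow>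
     (\<forall>R\<in>resource_sets n.
        (\<forall>j\<in>{1..n}. 0 \<le> s R j) \<and>
        (\<forall>j\<in>{1..n}. j \<notin> R \<longrightarrow> s R j = 0) \<and>
        (\<Sum>j\<in>{1..n}. s R j) = mu R)"

definition load :: "nat \<Rightarrow> (nat set \<Rightarrow> nat \<Rightarrow> real) \<Rightarrow> nat \<Rightarrow> real" where
  "load n s j = (\<Sum>R\<in>resource_sets n. s R j)"

definition cost :: "nat \<Rightarrow> (nat \<Rightarrow> real \<Rightarrow> real) \<Rightarrow> (nat set \<Rightarrow> nat \<Rightarrow> real) \<Rightarrow> nat \<Rightarrow> real" where
  "cost n f s j = f j (load n s j)"

definition is_nash_eq :: "nat \<Rightarrow> (nat \<Rightarrow> real \<Rightarrow> real) \<Rightarrow> (nat set \<Rightarrow> real) \<Rightarrow> (nat set \<Rightarrow> nat \<Rightarrow> real) \<Rightarrow> bool" where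
  "is_nash_eq n f mu s \<longleftrightarrow>
     is_consumption_profile n mu s \<and>
     (\<forall>R\<in>resource_sets n. \<forall>k\<in>{1..n}. \<forall>j\<in>R.
        0 < s R k \<longrightarrow> cost n f s k \<le> cost n f s j)"

end

theory Submission
  imports Defs
begin

text \<open>
  Given two Nash equilibria s and s', let A be the set of resources that are strictly
  cheaper under s than under s'.  Since every cost function is nondecreasing, each
  resource of A carries strictly more load under s' than under s, so if A is nonempty
  the total load on A is strictly larger under s'.  On the other hand, for every
  demand R: if s' routes some of R to a resource k of A, then s routes nothing of R
  outside A (a resource i outside A used by s would give
  cost s i \<le> cost s k < cost s' k \<le> cost s' i \<le> cost s i), so s puts all of
  mu R on A and hence at least as much as s' does.  Summing over all R shows the total
  load on A is at least as large under s, a contradiction.  So A is empty, and by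
  symmetry the two cost vectors coincide.
\<close>

definition cheaper_resources ::
  "nat \<Rightarrow> (nat \<Rightarrow> real \<Rightarrow> real) \<Rightarrow> (nat set \<Rightarrow> nat \<Rightarrow> real) \<Rightarrow> (nat set \<Rightarrow> nat \<Rightarrow> real) \<Rightarrow> nat set"
  where "cheaper_resources n f s s' = {j\<in>{1..n}. cost n f s j < cost n f s' j}"

lemma profile_nonneg:
  assumes "is_consumption_profile n mu s" "R \<in> resource_sets n" "j \<in> {1..n}"
  shows "0 \<le> s R j"
  using assms by (simp add: is_consumption_profile_def)

lemma profile_pos_in_set:
  assumes "is_consumption_profile n mu s" "R \<in> resource_sets n" "j \<in> {1..n}" "0 < s R j"
  shows "j \<in> R"
  using assms unfolding is_consumption_profile_def by fastforce

lemma load_nonneg: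
  assumes "is_consumption_profile n mu s" "j \<in> {1..n}"
  shows "0 \<le> load n s j"
  unfolding load_def using assms by (auto intro!: sum_nonneg profile_nonneg)

lemma profile_mass_on_subset:
  assumes cp: "is_consumption_profile n mu s" and R: "R \<in> resource_sets n"
    and A: "A \<subseteq> {1..n}"
  shows "(\<Sum>j\<in>A. s R j) \<le> mu R"
    and "(\<forall>i\<in>{1..n} - A. s R i = 0) \<Longrightarrow> (\<Sum>j\<in>A. s R j) = mu R"
proof -
  have split: "mu R = (\<Sum>j\<in>A. s R j) + (\<Sum>j\<in>{1..n} - A. s R j)"
  proof -
    have "mu R = (\<Sum>j\<in>{1..n}. s R j)" using cp R by (simp add: is_consumption_profile_def)
    also have "\<dots> = (\<Sum>j\<in>A. s R j) + (\<Sum>j\<in>{1..n} - A. s R j)"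
      using A by (simp add: sum.subset_diff)
    finally show ?thesis .
  qed
  have "0 \<le> (\<Sum>j\<in>{1..n} - A. s R j)"
    using cp R by (auto intro!: sum_nonneg profile_nonneg)
  then show "(\<Sum>j\<in>A. s R j) \<le> mu R" using split by linarith
  show "(\<Sum>j\<in>A. s R j) = mu R" if "\<forall>i\<in>{1..n} - A. s R i = 0"
    using split that by simp
qed

lemma sum_load_eq:
  "(\<Sum>j\<in>A. load n s j) = (\<Sum>R\<in>resource_sets n. \<Sum>j\<in>A. s R j)"
  unfolding load_def by (rule sum.swap)

lemma cheaper_has_less_load:
  assumes g: "is_rs_game n f mu" and cp: "is_consumption_profile n mu s'"
    and j: "j \<in> {1..n}" and lt: "cost n f s j < cost n f s' j"
  shows "load n s j < load n s' j"
proof (rule ccontr)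
  assume "\<not> load n s j < load n s' j"
  then have "f j (load n s' j) \<le> f j (load n s j)"
    using g j load_nonneg[OF cp j] by (auto simp: is_rs_game_def)
  then show False using lt by (simp add: cost_def)
qed

lemma nash_exchange:
  assumes ns: "is_nash_eq n f mu s" and ns': "is_nash_eq n f mu s'"
    and R: "R \<in> resource_sets n"
    and k: "k \<in> cheaper_resources n f s s'" and k_used: "0 < s' R k"
    and i: "i \<in> {1..n} - cheaper_resources n f s s'"
  shows "s R i = 0"
proof (rule ccontr)
  have cp: "is_consumption_profile n mu s" and cp': "is_consumption_profile n mu s'"
    using ns ns' by (auto simp: is_nash_eq_def)
  have kn: "k \<in> {1..n}" using k by (simp add: cheaper_resources_def)
  assume "s R i \<noteq> 0"
  with profile_nonneg[OF cp R] i have i_used: "0 < s R i" by force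
  have "cost n f s i \<le> cost n f s k"
    using ns R i profile_pos_in_set[OF cp' R kn k_used] i_used by (auto simp: is_nash_eq_def)
  also have "\<dots> < cost n f s' k" using k by (simp add: cheaper_resources_def)
  also have "\<dots> \<le> cost n f s' i"
    using ns' R kn profile_pos_in_set[OF cp R _ i_used] i k_used by (auto simp: is_nash_eq_def)
  also have "\<dots> \<le> cost n f s i" using i by (auto simp: cheaper_resources_def)
  finally show False by simp
qed

lemma demand_on_cheaper:
  assumes ns: "is_nash_eq n f mu s" and ns': "is_nash_eq n f mu s'"
    and R: "R \<in> resource_sets n"
  shows "(\<Sum>j\<in>cheaper_resources n f s s'. s' R j) \<le> (\<Sum>j\<in>cheaper_resources n f s s'. s R j)"
    (is "(\<Sum>j\<in>?A. s' R j) \<le> (\<Sum>j\<in>?A. s R j)")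
proof -
  have cp: "is_consumption_profile n mu s" and cp': "is_consumption_profile n mu s'"
    using ns ns' by (auto simp: is_nash_eq_def)
  have A: "?A \<subseteq> {1..n}" by (auto simp: cheaper_resources_def)
  show ?thesis
  proof (cases "\<exists>k\<in>?A. 0 < s' R k")
    case True
    then obtain k where "k \<in> ?A" "0 < s' R k" by blast
    then have "\<forall>i\<in>{1..n} - ?A. s R i = 0" using nash_exchange[OF ns ns' R] by blast
    then have "(\<Sum>j\<in>?A. s R j) = mu R" by (rule profile_mass_on_subset(2)[OF cp R A])
    then show ?thesis using profile_mass_on_subset(1)[OF cp' R A] by simp
  next
    case False
    then have "(\<Sum>j\<in>?A. s' R j) \<le> 0" by (intro sum_nonpos) (auto simp: not_less)
    moreover have "0 \<le> (\<Sum>j\<in>?A. s R j)"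
      using A by (auto intro!: sum_nonneg profile_nonneg[OF cp R])
    ultimately show ?thesis by linarith
  qed
qed

lemma cheaper_resources_empty:
  assumes g: "is_rs_game n f mu"
    and ns: "is_nash_eq n f mu s" and ns': "is_nash_eq n f mu s'"
  shows "cheaper_resources n f s s' = {}"
proof (rule ccontr)
  let ?A = "cheaper_resources n f s s'"
  assume "?A \<noteq> {}"
  have cp': "is_consumption_profile n mu s'" using ns' by (simp add: is_nash_eq_def)
  have "finite ?A" by (simp add: cheaper_resources_def)
  have "(\<Sum>j\<in>?A. load n s j) < (\<Sum>j\<in>?A. load n s' j)"
    using cheaper_has_less_load[OF g cp'] by (intro sum_strict_mono[OF \<open>finite ?A\<close> \<open>?A \<noteq> {}\<close>])
      (simp add: cheaper_resources_def)
  also have "\<dots> = (\<Sum>R\<in>resource_sets n. \<Sum>j\<in>?A. s' R j)" by (rule sum_load_eq)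
  also have "\<dots> \<le> (\<Sum>R\<in>resource_sets n. \<Sum>j\<in>?A. s R j)"
    by (rule sum_mono) (rule demand_on_cheaper[OF ns ns'])
  also have "\<dots> = (\<Sum>j\<in>?A. load n s j)" by (rule sum_load_eq[symmetric])
  finally show False by simp
qed

theorem mainTheorem2:
  fixes n :: nat and f :: "nat \<Rightarrow> real \<Rightarrow> real" and mu :: "nat set \<Rightarrow> real"
    and s s' :: "nat set \<Rightarrow> nat \<Rightarrow> real"
  assumes "is_rs_game n f mu"
    and "is_nash_eq n f mu s"
    and "is_nash_eq n f mu s'"
  shows "\<forall>j\<in>{1..n}. cost n f s j = cost n f s' j"
proof
  fix j assume j: "j \<in> {1..n}"
  have "\<not> cost n f s j < cost n f s' j"
    using cheaper_resources_empty[OF assms(1,2,3)] j by (auto simp: cheaper_resources_def)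
  moreover have "\<not> cost n f s' j < cost n f s j"
    using cheaper_resources_empty[OF assms(1,3,2)] j by (auto simp: cheaper_resources_def)
  ultimately show "cost n f s j = cost n f s' j" by linarith
qed

end
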